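(* Let $\ell\ge1$, $n\ge1$, ${\mathbf y}_1,\dots,{\mathbf y}_n\in\mathbb{F}_2^\ell$, and let $M=[P_{{\mathbf y}_1}\ P_{{\mathbf y}_2}\ \cdots\ P_{{\mathbf y}_n}]$ be the $2^\ell\times n2^\ell$ binary matrix formed by $n$ dyadic permutation matrices side by side. Then the Tanner graph of $M$ is acyclic, and it has exactly $2^\ell(2^{n-1}-1)$ absorbing sets whose induced subgraphs are connected; each of them is an $(a,0)$-absorbing set with $a$ even and $2\le a\le n$.
   Context: For ${\mathbf a}\in\mathbb{F}_2^\ell$, $P_{\mathbf a}$ is the $2^\ell\times2^\ell$ binary matrix with $(P_{\mathbf a})_{{\mathbf x},{\mathbf y}}=1$ iff ${\mathbf y}={\mathbf x}+{\mathbf a}$ (rows/columns indexed by $\mathbb{F}_2^\ell$). The Tanner graph of a binary matrix is the bipartite graph with check nodes = rows, variable nodes = columns, edges at the $1$-entries. For a nonempty set $\mathcal{A}$ of variable nodes, let $G_{\mathcal{A}\cup\mathcal{N}(\mathcal{A})}$ be the subgraph induced by $\mathcal{A}$ and its neighborhood $\mathcal{N}(\mathcal{A})$. $\mathcal{A}$ is an $(a,b)$-absorbing set if $|\mathcal{A}|=a$, the induced subgraph has exactly $b$ check nodes of odd degree, and every $v\in\mathcal{A}$ has strictly more neighbors of even degree than of odd degree in the induced subgraph. Only absorbing sets whose induced subgraph is connected are counted. *)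

theory Defs
  imports Main
begin

definition F2vec :: "nat \<Rightarrow> bool list set" where
  "F2vec l = {v. length v = l}"

definition vadd :: "bool list \<Rightarrow> bool list \<Rightarrow> bool list" where
  "vadd x a = map2 (\<noteq>) x a"

definition dyadic_perm :: "bool list \<Rightarrow> bool list \<Rightarrow> bool list \<Rightarrow> bool" where
  "dyadic_perm a x y = (y = vadd x a)"

text \<open>Tanner graph: check nodes = rows (Inl), variable nodes = columns (Inr).\<close>

definition tanner_edges :: "'r set \<Rightarrow> 'c set \<Rightarrow> ('r \<Rightarrow> 'c \<Rightarrow> bool) \<Rightarrow> ('r + 'c) rel" where
  "tanner_edges R C H =
     {(Inl x, Inr v) | x v. x \<in> R \<and> v \<in> C \<and> H x v} \<union>
     {(Inr v, Inl x) | x v. x \<in> R \<and> v \<in> C \<and> H x v}"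

definition tanner_acyclic :: "'r set \<Rightarrow> 'c set \<Rightarrow> ('r \<Rightarrow> 'c \<Rightarrow> bool) \<Rightarrow> bool" where
  "tanner_acyclic R C H =
     (\<not> (\<exists>vs. length vs \<ge> 3 \<and> distinct vs \<and>
        (\<forall>i < length vs. (vs ! i, vs ! ((i + 1) mod length vs)) \<in> tanner_edges R C H)))"

definition nbhd :: "'r set \<Rightarrow> ('r \<Rightarrow> 'c \<Rightarrow> bool) \<Rightarrow> 'c set \<Rightarrow> 'r set" where
  "nbhd R H A = {x \<in> R. \<exists>v \<in> A. H x v}"

definition ind_deg :: "('r \<Rightarrow> 'c \<Rightarrow> bool) \<Rightarrow> 'c set \<Rightarrow> 'r \<Rightarrow> nat" where
  "ind_deg H A x = card {v \<in> A. H x v}"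

definition odd_checks :: "'r set \<Rightarrow> ('r \<Rightarrow> 'c \<Rightarrow> bool) \<Rightarrow> 'c set \<Rightarrow> 'r set" where
  "odd_checks R H A = {x \<in> nbhd R H A. odd (ind_deg H A x)}"

definition absorbing_set ::
  "'r set \<Rightarrow> 'c set \<Rightarrow> ('r \<Rightarrow> 'c \<Rightarrow> bool) \<Rightarrow> 'c set \<Rightarrow> nat \<Rightarrow> nat \<Rightarrow> bool" where
  "absorbing_set R C H A a b =
     (A \<subseteq> C \<and> A \<noteq> {} \<and> card A = a \<and> card (odd_checks R H A) = b \<and>
      (\<forall>v \<in> A. card {x \<in> nbhd R H A. H x v \<and> odd (ind_deg H A x)}
               < card {x \<in> nbhd R H A. H x v \<and> even (ind_deg H A x)}))"

definition is_absorbing_set :: "'r set \<Rightarrow> 'c set \<Rightarrow> ('r \<Rightarrow> 'c \<Rightarrow> bool) \<Rightarrow> 'c set \<Rightarrow> bool" where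
  "is_absorbing_set R C H A = (\<exists>a b. absorbing_set R C H A a b)"

definition induced_connected :: "'r set \<Rightarrow> 'c set \<Rightarrow> ('r \<Rightarrow> 'c \<Rightarrow> bool) \<Rightarrow> 'c set \<Rightarrow> bool" where
  "induced_connected R C H A =
     (let V = Inl ` nbhd R H A \<union> Inr ` A;
          E = tanner_edges R C H \<inter> (V \<times> V)
      in \<forall>u \<in> V. \<forall>w \<in> V. (u, w) \<in> E\<^sup>*)"

text \<open>Rows indexed by F_2^l; column (i,y) (with 0 \<le> i < n, y \<in> F_2^l) is column y
  of the i-th block P_{ys i}.\<close>
definition blockM_rows :: "nat \<Rightarrow> bool list set" where
  "blockM_rows l = F2vec l"

definition blockM_cols :: "nat \<Rightarrow> nat \<Rightarrow> (nat \<times> bool list) set" where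
  "blockM_cols n l = {0..<n} \<times> F2vec l"

definition blockM :: "(nat \<Rightarrow> bool list) \<Rightarrow> bool list \<Rightarrow> nat \<times> bool list \<Rightarrow> bool" where
  "blockM ys x c = dyadic_perm (ys (fst c)) x (snd c)"

end

theory Submission
  imports Defs
begin

text \<open>Every column of M = [P_{y_1} ... P_{y_n}] contains exactly one 1, so every variable
  node of the Tanner graph is a leaf; a cycle would have to pass through a variable node
  between two distinct check nodes adjacent to it. For the same reason, if the induced
  subgraph of A and N(A) is connected it is a star around a single check node x, whose
  degree is |A|. Each v in A has x as its only neighbour, so the absorbing condition holds
  iff |A| is even, and then no check node has odd degree. The connected absorbing sets are
  therefore the nonempty even subsets of the supports of the rows; every row of M has
  weight n, and an n-set has 2^(n-1) - 1 nonempty even subsets.\<close>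

lemma card_even_subsets:
  assumes "finite S" "S \<noteq> {}"
  shows "card {T. T \<subseteq> S \<and> even (card T)} = 2 ^ (card S - 1)"
proof -
  let ?E = "{T. T \<subseteq> S \<and> even (card T)}" and ?O = "{T. T \<subseteq> S \<and> odd (card T)}"
  have "card ?E = card ?O"
    using card_subsupersets_even_odd[of S "{}"] assms by auto
  moreover have "card ?E + card ?O = 2 ^ card S"
  proof -
    have "?E \<union> ?O = Pow S" "?E \<inter> ?O = {}" by auto
    then show ?thesis
      using card_Un_disjoint[of ?E ?O] card_Pow[of S] assms(1) by simp
  qed
  moreover have "card S \<noteq> 0" using assms by simp
  ultimately show ?thesis by (cases "card S") auto
qed

lemma card_nonempty_even_subsets:
  assumes "finite S"
  shows "card {T. T \<subseteq> S \<and> T \<noteq> {} \<and> even (card T)} = 2 ^ (card S - 1) - 1"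
proof (cases "S = {}")
  case False
  have "{T. T \<subseteq> S \<and> T \<noteq> {} \<and> even (card T)} = {T. T \<subseteq> S \<and> even (card T)} - {{}}"
    by auto
  then show ?thesis
    using card_even_subsets[OF assms False] assms by (simp add: card_Diff_singleton)
qed simp

lemma tanner_edges_simps [simp]:
  "(Inl x, Inr v) \<in> tanner_edges R C H \<longleftrightarrow> x \<in> R \<and> v \<in> C \<and> H x v"
  "(Inr v, Inl x) \<in> tanner_edges R C H \<longleftrightarrow> x \<in> R \<and> v \<in> C \<and> H x v"
  "(Inl x, Inl y) \<notin> tanner_edges R C H"
  "(Inr v, Inr w) \<notin> tanner_edges R C H"
  by (auto simp: tanner_edges_def)

definition row_support :: "'c set \<Rightarrow> ('r \<Rightarrow> 'c \<Rightarrow> bool) \<Rightarrow> 'r \<Rightarrow> 'c set" where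
  "row_support C H x = {v \<in> C. H x v}"

locale column_weight_le_one =
  fixes R :: "'r set" and C :: "'c set" and H :: "'r \<Rightarrow> 'c \<Rightarrow> bool"
  assumes unique_check: "\<lbrakk>x \<in> R; x' \<in> R; v \<in> C; H x v; H x' v\<rbrakk> \<Longrightarrow> x = x'"
begin

lemma tanner_acyclic: "tanner_acyclic R C H"
  unfolding tanner_acyclic_def
proof
  assume "\<exists>vs. 3 \<le> length vs \<and> distinct vs \<and>
    (\<forall>i < length vs. (vs ! i, vs ! ((i + 1) mod length vs)) \<in> tanner_edges R C H)"
  then obtain vs where len: "3 \<le> length vs" and dist: "distinct vs"
    and edge: "\<And>i. i < length vs \<Longrightarrow> (vs ! i, vs ! ((i + 1) mod length vs)) \<in> tanner_edges R C H"
    by blast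
  define L where "L = length vs"
  have L3: "3 \<le> L" using len by (simp add: L_def)
  define next_index where "next_index i = (i + 1) mod L" for i
  have next_lt: "next_index i < L" for i
    using L3 by (simp add: next_index_def)
  have edge_next: "i < L \<Longrightarrow> (vs ! i, vs ! next_index i) \<in> tanner_edges R C H" for i
    using edge by (simp add: next_index_def L_def)
  have next_0: "next_index 0 = 1"
    using L3 by (simp add: next_index_def)
  obtain i v where i: "i < L" and v: "vs ! next_index i = Inr v"
  proof (cases "vs ! 1")
    case (Inr v)
    then show thesis using that[of 0 v] L3 next_0 by simp
  next
    case (Inl x)
    then obtain v where "vs ! next_index 1 = Inr v"
      using edge_next[of 1] L3 by (cases "vs ! next_index 1") auto
    then show thesis using that[of 1 v] L3 by simp
  qed
  text \<open>The variable node in position \<open>next_index i\<close> is adjacent to its two cyclic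
    neighbours, which are check nodes and therefore coincide.\<close>
  obtain x where x: "vs ! i = Inl x" "x \<in> R" "v \<in> C" "H x v"
    using edge_next[OF i] v by (cases "vs ! i") auto
  obtain x' where x': "vs ! next_index (next_index i) = Inl x'" "x' \<in> R" "H x' v"
    using edge_next[OF next_lt[of i]] v by (cases "vs ! next_index (next_index i)") auto
  have "vs ! i = vs ! next_index (next_index i)"
    using x x' unique_check by simp
  then have "i = next_index (next_index i)"
    using nth_eq_iff_index_eq[OF dist] i next_lt by (simp add: L_def)
  moreover have "i \<noteq> next_index (next_index i)"
    using i L3 by (cases "i + 2 < L") (simp_all add: next_index_def mod_Suc_eq le_mod_geq)
  ultimately show False by simp
qed

lemma nbhd_star:
  assumes "x \<in> R" "A \<subseteq> row_support C H x" "A \<noteq> {}"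
  shows "nbhd R H A = {x}"
  using assms unique_check unfolding nbhd_def row_support_def by blast

lemma ind_deg_star:
  assumes "A \<subseteq> row_support C H x"
  shows "ind_deg H A x = card A"
proof -
  have "{v \<in> A. H x v} = A" using assms unfolding row_support_def by blast
  then show ?thesis unfolding ind_deg_def by simp
qed

lemma star_absorbing:
  assumes x: "x \<in> R" and A: "A \<subseteq> row_support C H x" "A \<noteq> {}" and even: "even (card A)"
  shows "absorbing_set R C H A (card A) 0"
proof -
  have nbhd: "nbhd R H A = {x}" and deg: "ind_deg H A x = card A"
    using nbhd_star[OF x A] ind_deg_star[OF A(1)] .
  have "card {y \<in> nbhd R H A. H y v \<and> odd (ind_deg H A y)}
      < card {y \<in> nbhd R H A. H y v \<and> even (ind_deg H A y)}" if "v \<in> A" for v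
  proof -
    have no_odd: "{y \<in> nbhd R H A. H y v \<and> odd (ind_deg H A y)} = {}"
      and even_centre: "{y \<in> nbhd R H A. H y v \<and> even (ind_deg H A y)} = {x}"
      using that A(1) even deg unfolding nbhd row_support_def by auto
    show ?thesis unfolding no_odd even_centre by simp
  qed
  moreover have "odd_checks R H A = {}"
    using even deg unfolding odd_checks_def nbhd by simp
  moreover have "A \<subseteq> C" using A(1) unfolding row_support_def by blast
  ultimately show ?thesis
    using A(2) unfolding absorbing_set_def by simp
qed

lemma star_absorbing_imp_even:
  assumes x: "x \<in> R" and A: "A \<subseteq> row_support C H x" "A \<noteq> {}"
    and absorbing: "is_absorbing_set R C H A"
  shows "even (card A)"
proof (rule ccontr)
  assume odd: "odd (card A)"
  have nbhd: "nbhd R H A = {x}" and deg: "ind_deg H A x = card A"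
    using nbhd_star[OF x A] ind_deg_star[OF A(1)] .
  obtain v where v: "v \<in> A" using A(2) by blast
  have "card {y \<in> nbhd R H A. H y v \<and> odd (ind_deg H A y)}
      < card {y \<in> nbhd R H A. H y v \<and> even (ind_deg H A y)}"
    using absorbing v unfolding is_absorbing_set_def absorbing_set_def by blast
  moreover have "{y \<in> nbhd R H A. H y v \<and> even (ind_deg H A y)} = {}"
    using odd deg unfolding nbhd by simp
  ultimately show False by simp
qed

lemma star_connected:
  assumes x: "x \<in> R" and A: "A \<subseteq> row_support C H x" "A \<noteq> {}"
  shows "induced_connected R C H A"
  unfolding induced_connected_def Let_def nbhd_star[OF x A]
proof (intro ballI)
  let ?V = "Inl ` {x} \<union> Inr ` A"
  let ?E = "tanner_edges R C H \<inter> (?V \<times> ?V)"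
  have spokes: "(Inr v, Inl x) \<in> ?E" "(Inl x, Inr v) \<in> ?E" if "v \<in> A" for v
    using that x A(1) unfolding row_support_def by auto
  have "(u, Inl x) \<in> ?E\<^sup>* \<and> (Inl x, u) \<in> ?E\<^sup>*" if "u \<in> ?V" for u
    using that spokes by blast
  then show "(u, w) \<in> ?E\<^sup>*" if "u \<in> ?V" "w \<in> ?V" for u w
    using that by (meson rtrancl_trans)
qed

lemma reachable_from_check_in_star:
  assumes "(Inl x, u) \<in> (tanner_edges R C H \<inter> W)\<^sup>*" and x: "x \<in> R"
  shows "u \<in> insert (Inl x) (Inr ` row_support C H x)"
  using assms(1)
proof (induction rule: rtrancl_induct)
  case (step u w)
  then show ?case
    using unique_check x by (cases w) (auto simp: row_support_def)
qed simp

lemma connected_absorbing_imp_star: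
  assumes absorbing: "is_absorbing_set R C H A" and connected: "induced_connected R C H A"
  obtains x where "x \<in> R" "A \<subseteq> row_support C H x" "A \<noteq> {}"
proof -
  obtain v0 where v0: "v0 \<in> A"
    and "card {y \<in> nbhd R H A. H y v0 \<and> odd (ind_deg H A y)}
       < card {y \<in> nbhd R H A. H y v0 \<and> even (ind_deg H A y)}"
    using absorbing unfolding is_absorbing_set_def absorbing_set_def by blast
  then obtain x where x: "x \<in> nbhd R H A"
    by (metis (no_types, lifting) card.empty empty_Collect_eq less_zeroE)
  have "v \<in> row_support C H x" if "v \<in> A" for v
  proof -
    let ?V = "Inl ` nbhd R H A \<union> Inr ` A"
    have "(Inl x, Inr v) \<in> (tanner_edges R C H \<inter> ?V \<times> ?V)\<^sup>*"
      using connected x that unfolding induced_connected_def Let_def by blast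
    then show ?thesis
      using reachable_from_check_in_star x unfolding nbhd_def by blast
  qed
  then show thesis
    using that x v0 unfolding nbhd_def by blast
qed

lemma connected_absorbing_iff_star:
  "is_absorbing_set R C H A \<and> induced_connected R C H A \<longleftrightarrow>
     (\<exists>x \<in> R. A \<subseteq> row_support C H x \<and> A \<noteq> {} \<and> even (card A))"
  by (metis connected_absorbing_imp_star star_absorbing_imp_even star_absorbing star_connected
      is_absorbing_set_def)

lemma card_connected_absorbing_sets:
  assumes "finite R" "finite C"
  shows "card {A. is_absorbing_set R C H A \<and> induced_connected R C H A}
    = (\<Sum>x \<in> R. 2 ^ (card (row_support C H x) - 1) - 1)"
proof -
  define stars where "stars x = {A. A \<subseteq> row_support C H x \<and> A \<noteq> {} \<and> even (card A)}" for x
  have "{A. is_absorbing_set R C H A \<and> induced_connected R C H A} = (\<Union>x \<in> R. stars x)"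
    using connected_absorbing_iff_star unfolding stars_def by blast
  moreover have finite_support: "finite (row_support C H x)" for x
    using assms(2) unfolding row_support_def by simp
  then have "finite (stars x)" for x
    unfolding stars_def by (simp add: finite_subset[OF _ finite_Pow_iff[THEN iffD2]])
  moreover have "stars x \<inter> stars x' = {}" if "x \<in> R" "x' \<in> R" "x \<noteq> x'" for x x'
    using that unique_check unfolding stars_def row_support_def by blast
  moreover have "card (stars x) = 2 ^ (card (row_support C H x) - 1) - 1" for x
    unfolding stars_def by (rule card_nonempty_even_subsets[OF finite_support])
  ultimately show ?thesis
    using assms(1) by (simp add: card_UN_disjoint)
qed

lemma connected_absorbing_size:
  assumes "finite C" and absorbing: "is_absorbing_set R C H A"
    and connected: "induced_connected R C H A"
  obtains x where "x \<in> R" "absorbing_set R C H A (card A) 0" "even (card A)"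
    "2 \<le> card A" "card A \<le> card (row_support C H x)"
proof -
  obtain x where x: "x \<in> R" and A: "A \<subseteq> row_support C H x" "A \<noteq> {}"
    using connected_absorbing_imp_star[OF absorbing connected] .
  have even: "even (card A)" using star_absorbing_imp_even[OF x A absorbing] .
  have "finite (row_support C H x)" using assms(1) unfolding row_support_def by simp
  then have "card A \<le> card (row_support C H x)" and "card A \<noteq> 0"
    using A by (auto simp: card_mono dest: finite_subset)
  with even have "2 \<le> card A" by presburger
  then show thesis
    using that x star_absorbing[OF x A even] even \<open>card A \<le> _\<close> by blast
qed

end

lemma finite_F2vec: "finite (F2vec l)"
  unfolding F2vec_def using finite_lists_length_eq[of "UNIV :: bool set" l] by simp

lemma card_F2vec: "card (F2vec l) = 2 ^ l"
  unfolding F2vec_def using card_lists_length_eq[of "UNIV :: bool set" l] by simp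

lemma length_vadd [simp]: "length (vadd x a) = min (length x) (length a)"
  by (simp add: vadd_def)

lemma vadd_vadd_cancel: "length x = length a \<Longrightarrow> vadd (vadd x a) a = x"
proof (induction x arbitrary: a)
  case (Cons b x)
  then show ?case by (cases a) (auto simp: vadd_def)
qed (simp add: vadd_def)

lemma blockM_column_weight_le_one:
  assumes "\<forall>i < n. ys i \<in> F2vec l"
  shows "column_weight_le_one (blockM_rows l) (blockM_cols n l) (blockM ys)"
proof
  fix x x' v
  assume rows: "x \<in> blockM_rows l" "x' \<in> blockM_rows l" and col: "v \<in> blockM_cols n l"
    and "blockM ys x v" "blockM ys x' v"
  then have "snd v = vadd x (ys (fst v))" "snd v = vadd x' (ys (fst v))"
    unfolding blockM_def dyadic_perm_def by simp_all
  moreover have "length x = length (ys (fst v))" "length x' = length (ys (fst v))"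
    using rows col assms unfolding blockM_rows_def blockM_cols_def F2vec_def by auto
  ultimately show "x = x'"
    using vadd_vadd_cancel by metis
qed

lemma row_support_blockM:
  assumes "\<forall>i < n. ys i \<in> F2vec l" and "x \<in> F2vec l"
  shows "row_support (blockM_cols n l) (blockM ys) x = (\<lambda>i. (i, vadd x (ys i))) ` {0..<n}"
  using assms
  unfolding row_support_def blockM_cols_def blockM_def dyadic_perm_def F2vec_def by auto

lemma card_row_support_blockM:
  assumes "\<forall>i < n. ys i \<in> F2vec l" and "x \<in> F2vec l"
  shows "card (row_support (blockM_cols n l) (blockM ys) x) = n"
proof -
  have "inj_on (\<lambda>i. (i, vadd x (ys i))) {0..<n}"
    by (rule inj_onI) simp
  then show ?thesis
    unfolding row_support_blockM[OF assms] by (simp add: card_image)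
qed

theorem mainTheorem8:
  fixes l n :: nat and ys :: "nat \<Rightarrow> bool list"
  assumes "l \<ge> 1" and "n \<ge> 1" and "\<forall>i < n. ys i \<in> F2vec l"
  shows "tanner_acyclic (blockM_rows l) (blockM_cols n l) (blockM ys) \<and>
    card {A. is_absorbing_set (blockM_rows l) (blockM_cols n l) (blockM ys) A \<and>
             induced_connected (blockM_rows l) (blockM_cols n l) (blockM ys) A}
      = 2 ^ l * (2 ^ (n - 1) - 1) \<and>
    (\<forall>A. is_absorbing_set (blockM_rows l) (blockM_cols n l) (blockM ys) A \<and>
         induced_connected (blockM_rows l) (blockM_cols n l) (blockM ys) A \<longrightarrow>
       (\<exists>a. absorbing_set (blockM_rows l) (blockM_cols n l) (blockM ys) A a 0 \<and>
            even a \<and> 2 \<le> a \<and> a \<le> n))"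
proof -
  interpret column_weight_le_one "blockM_rows l" "blockM_cols n l" "blockM ys"
    using assms(3) by (rule blockM_column_weight_le_one)
  have finite_cols: "finite (blockM_cols n l)"
    unfolding blockM_cols_def by (simp add: finite_F2vec)
  have row_weight: "card (row_support (blockM_cols n l) (blockM ys) x) = n"
    if "x \<in> blockM_rows l" for x
    using card_row_support_blockM assms(3) that unfolding blockM_rows_def by blast
  have "card {A. is_absorbing_set (blockM_rows l) (blockM_cols n l) (blockM ys) A \<and>
             induced_connected (blockM_rows l) (blockM_cols n l) (blockM ys) A}
      = 2 ^ l * (2 ^ (n - 1) - 1)"
    using card_connected_absorbing_sets[OF _ finite_cols] row_weight
    by (simp add: blockM_rows_def finite_F2vec card_F2vec)
  moreover have "\<exists>a. absorbing_set (blockM_rows l) (blockM_cols n l) (blockM ys) A a 0 \<and>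
      even a \<and> 2 \<le> a \<and> a \<le> n"
    if connected_absorbing: "is_absorbing_set (blockM_rows l) (blockM_cols n l) (blockM ys) A"
      "induced_connected (blockM_rows l) (blockM_cols n l) (blockM ys) A" for A
  proof -
    obtain x where "x \<in> blockM_rows l" "absorbing_set (blockM_rows l) (blockM_cols n l) (blockM ys) A (card A) 0"
      "even (card A)" "2 \<le> card A" "card A \<le> card (row_support (blockM_cols n l) (blockM ys) x)"
      using connected_absorbing_size[OF finite_cols connected_absorbing] .
    then show ?thesis using row_weight by auto
  qed
  ultimately show ?thesis
    using tanner_acyclic by blast
qed

end
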